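(* Let $D\subseteq\mathbb{R}^n$ be nonempty, convex, closed and bounded, and let $f:\mathbb{R}^n\to\mathbb{R}$ be continuously differentiable. Consider Method (CGMIS) (described in the context). Then: (i) the number of changes of the index $k$ at each stage $p$ is finite, so the sequence $\{w^p\}_{p\ge0}$ is infinite; (ii) the sequence $\{w^p\}$ has limit points, and all of them belong to $D^0$; (iii) if, in addition, $f$ is pseudo-convex on $D$, then all limit points of $\{w^p\}$ belong to $D^*$, and $\lim_{p\to\infty}f(w^p)=f^*$.
   Context: Notation: $f'(x)$ is the gradient of $f$. The problem is $\min_{x\in D}f(x)$; $f^*=\inf_{x\in D}f(x)$ and $D^*$ is its solution set. $D^0$ is the set of $x^*\in D$ with $\langle f'(x^* ),x-x^*\rangle\ge0$ for all $x\in D$. $\mu(x)=\max_{y\in D}\langle f'(x),x-y\rangle$. A differentiable $\varphi$ is pseudo-convex on $D$ if for all $x,y\in D$, $\langle\varphi'(x),y-x\rangle\ge0$ implies $\varphi(y)\ge\varphi(x)$. Method (CGMIS): Choose $w^0\in D$, $\beta\in(0,1)$, and a positive sequence $\{\delta_p\}$ with $\delta_p\to0$. Set $p=1$. (Step 0) Choose a sequence of numbers $\tau_{l,p}\in(0,1)$, $l=0,1,\dots$, with $\tau_{l,p}\to0$ as $l\to\infty$; set $k=0$, $l=0$, $x^0=w^{p-1}$, and choose $\lambda_0\in(0,\tau_{0,p}]$. (Step 1) If $\mu(x^k)<\delta_p$, set $w^p=x^k$, replace $p$ by $p+1$ and go to Step 0 (restart). Otherwise choose any $z^k\in D$ with $\langle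 f'(x^k),x^k-z^k\rangle\ge\delta_p$. (Step 2) Set $d^k=z^k-x^k$, $x^{k+1}=x^k+\lambda_k d^k$. If $f(x^{k+1})\le f(x^k)+\beta\lambda_k\langle f'(x^k),d^k\rangle$, choose any $\lambda_{k+1}\in[\lambda_k,\tau_{l,p}]$ (with $l$ unchanged). Otherwise set $\lambda'_{k+1}=\min\{\lambda_k,\tau_{l+1,p}\}$, replace $l$ by $l+1$, and choose any $\lambda_{k+1}\in(0,\lambda'_{k+1}]$. Set $k=k+1$ and go to Step 1. The iterations with a fixed value of $p$ form stage $p$. *)

theory Defs
  imports "HOL-Analysis.Analysis"
begin

definition mu :: "'a::euclidean_space set \<Rightarrow> ('a \<Rightarrow> 'a) \<Rightarrow> 'a \<Rightarrow> real" where
  "mu D f' x = (SUP y\<in>D. f' x \<bullet> (x - y))"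

definition D0 :: "'a::euclidean_space set \<Rightarrow> ('a \<Rightarrow> 'a) \<Rightarrow> 'a set" where
  "D0 D f' = {xs \<in> D. \<forall>x\<in>D. f' xs \<bullet> (x - xs) \<ge> 0}"

definition fstar :: "'a set \<Rightarrow> ('a \<Rightarrow> real) \<Rightarrow> real" where
  "fstar D f = (INF x\<in>D. f x)"

definition Dstar :: "'a set \<Rightarrow> ('a \<Rightarrow> real) \<Rightarrow> 'a set" where
  "Dstar D f = {x \<in> D. f x = fstar D f}"

definition pseudo_convex_on :: "'a::euclidean_space set \<Rightarrow> ('a \<Rightarrow> real) \<Rightarrow> ('a \<Rightarrow> 'a) \<Rightarrow> bool" where
  "pseudo_convex_on D \<phi> \<phi>' \<longleftrightarrow> (\<forall>x\<in>D. \<forall>y\<in>D. \<phi>' x \<bullet> (y - x) \<ge> 0 \<longrightarrow> \<phi> y \<ge> \<phi> x)"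

definition limit_point_seq :: "(nat \<Rightarrow> 'a::topological_space) \<Rightarrow> 'a \<Rightarrow> bool" where
  "limit_point_seq w a \<longleftrightarrow> (\<exists>r. strict_mono r \<and> (w \<circ> r) \<longlonglongrightarrow> a)"

definition admissible_tau :: "(nat \<Rightarrow> real) \<Rightarrow> bool" where
  "admissible_tau \<tau> \<longleftrightarrow> (\<forall>l. 0 < \<tau> l \<and> \<tau> l < 1) \<and> \<tau> \<longlonglongrightarrow> 0"

definition stage_init :: "(nat \<Rightarrow> real) \<Rightarrow> (nat \<Rightarrow> 'a) \<Rightarrow> (nat \<Rightarrow> real) \<Rightarrow> (nat \<Rightarrow> nat) \<Rightarrow> 'a \<Rightarrow> bool" where
  "stage_init \<tau> x lam l x0 \<longleftrightarrow> x 0 = x0 \<and> l 0 = 0 \<and> 0 < lam 0 \<and> lam 0 \<le> \<tau> 0"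

text \<open>One non-terminating pass through Steps 1 and 2 at iteration k of a stage with threshold delta:
  the stopping test fails, z k is an admissible direction point, and x, lambda, l are updated.\<close>
definition cgmis_step ::
  "'a::euclidean_space set \<Rightarrow> ('a \<Rightarrow> real) \<Rightarrow> ('a \<Rightarrow> 'a) \<Rightarrow> real \<Rightarrow> real \<Rightarrow> (nat \<Rightarrow> real)
   \<Rightarrow> (nat \<Rightarrow> 'a) \<Rightarrow> (nat \<Rightarrow> 'a) \<Rightarrow> (nat \<Rightarrow> real) \<Rightarrow> (nat \<Rightarrow> nat) \<Rightarrow> nat \<Rightarrow> bool" where
  "cgmis_step D f f' \<beta> \<delta> \<tau> x z lam l k \<longleftrightarrow>
     \<delta> \<le> mu D f' (x k) \<and> z k \<in> D \<and> \<delta> \<le> f' (x k) \<bullet> (x k - z k) \<and>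
     x (Suc k) = x k + lam k *\<^sub>R (z k - x k) \<and>
     (if f (x (Suc k)) \<le> f (x k) + \<beta> * lam k * (f' (x k) \<bullet> (z k - x k))
      then l (Suc k) = l k \<and> lam k \<le> lam (Suc k) \<and> lam (Suc k) \<le> \<tau> (l k)
      else l (Suc k) = Suc (l k) \<and> 0 < lam (Suc k) \<and> lam (Suc k) \<le> min (lam k) (\<tau> (Suc (l k))))"

definition stage_output ::
  "'a::euclidean_space set \<Rightarrow> ('a \<Rightarrow> real) \<Rightarrow> ('a \<Rightarrow> 'a) \<Rightarrow> real \<Rightarrow> real \<Rightarrow> 'a \<Rightarrow> 'a \<Rightarrow> bool" where
  "stage_output D f f' \<beta> \<delta> w0 w1 \<longleftrightarrow>
     (\<exists>\<tau> x z lam l K. admissible_tau \<tau> \<and> stage_init \<tau> x lam l w0 \<and>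
        (\<forall>k<K. cgmis_step D f f' \<beta> \<delta> \<tau> x z lam l k) \<and>
        mu D f' (x K) < \<delta> \<and> w1 = x K)"

definition stage_infinite ::
  "'a::euclidean_space set \<Rightarrow> ('a \<Rightarrow> real) \<Rightarrow> ('a \<Rightarrow> 'a) \<Rightarrow> real \<Rightarrow> real \<Rightarrow> 'a \<Rightarrow> bool" where
  "stage_infinite D f f' \<beta> \<delta> x0 \<longleftrightarrow>
     (\<exists>\<tau> x z lam l. admissible_tau \<tau> \<and> stage_init \<tau> x lam l x0 \<and>
        (\<forall>k. cgmis_step D f f' \<beta> \<delta> \<tau> x z lam l k))"

text \<open>A full run of CGMIS: w 0 = w^0 and w (Suc p) = w^{p+1} is an output of stage p+1
  (threshold delta (p+1)) started at w p.\<close>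
definition cgmis_run ::
  "'a::euclidean_space set \<Rightarrow> ('a \<Rightarrow> real) \<Rightarrow> ('a \<Rightarrow> 'a) \<Rightarrow> real \<Rightarrow> (nat \<Rightarrow> real) \<Rightarrow> 'a \<Rightarrow> (nat \<Rightarrow> 'a) \<Rightarrow> bool" where
  "cgmis_run D f f' \<beta> \<delta> w0 w \<longleftrightarrow>
     w 0 = w0 \<and> (\<forall>p. stage_output D f f' \<beta> (\<delta> (Suc p)) (w p) (w (Suc p)))"

end

theory Submission
  imports Defs
begin

text \<open>Within a stage every direction \<open>z k - x k\<close> has slope at most \<open>-\<delta>\<close>. As \<open>f'\<close> is uniformly
  continuous on the compact set \<open>D\<close>, Armijo's test passes for all sufficiently small steps, so
  the bounds \<open>\<tau> l\<close> are lowered only finitely often; afterwards the steps never shrink and \<open>f\<close>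
  would decrease by a fixed amount per iteration, contradicting its boundedness on \<open>D\<close>. Hence
  every stage stops, with \<open>\<mu> (w p) < \<delta> p\<close>. At a limit point \<open>a\<close> of \<open>w\<close>, the inequality
  \<open>f' (w p) \<bullet> (w p - y) \<le> \<mu> (w p) < \<delta> p\<close> passes to the limit and gives \<open>a \<in> D0\<close>. Under
  pseudo-convexity \<open>D0 \<subseteq> D*\<close>, and compactness turns this into \<open>f (w p) \<longrightarrow> f*\<close>.\<close>

lemma mu_attained:
  assumes "compact D" "D \<noteq> {}"
  obtains s where "s \<in> D" "mu D f' x = f' x \<bullet> (x - s)"
    "\<And>y. y \<in> D \<Longrightarrow> f' x \<bullet> (x - y) \<le> f' x \<bullet> (x - s)"
proof -
  have "continuous_on D (\<lambda>y. f' x \<bullet> (x - y))"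
    by (intro continuous_intros)
  then obtain s where s: "s \<in> D" and max: "\<And>y. y \<in> D \<Longrightarrow> f' x \<bullet> (x - y) \<le> f' x \<bullet> (x - s)"
    using continuous_attains_sup[OF assms] by blast
  have "mu D f' x = f' x \<bullet> (x - s)"
    unfolding mu_def
  proof (rule antisym)
    show "(SUP y\<in>D. f' x \<bullet> (x - y)) \<le> f' x \<bullet> (x - s)"
      using assms(2) max by (auto intro!: cSUP_least)
    show "f' x \<bullet> (x - s) \<le> (SUP y\<in>D. f' x \<bullet> (x - y))"
      using max s by (auto intro!: cSUP_upper2 bdd_aboveI2)
  qed
  with s max that show thesis by blast
qed

lemma inner_le_mu:
  assumes "compact D" "y \<in> D"
  shows "f' x \<bullet> (x - y) \<le> mu D f' x"
  using mu_attained[OF assms(1), of f' x] assms(2) by force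

lemma not_bdd_below_of_uniform_decrease:
  fixes g :: "nat \<Rightarrow> real"
  assumes decrease: "\<And>n. g (Suc n) \<le> g n - c" and "0 < c"
  shows "\<not> bdd_below (range g)"
proof
  assume "bdd_below (range g)"
  then obtain m where m: "\<And>n. m \<le> g n"
    by (auto simp: bdd_below_def)
  have bound: "g n \<le> g 0 - real n * c" for n
  proof (induction n)
    case (Suc n)
    then show ?case using decrease[of n] by (simp add: algebra_simps)
  qed simp
  obtain n where "g 0 - m < real n * c"
    using reals_Archimedean3[OF \<open>0 < c\<close>] by blast
  with bound[of n] m[of n] show False
    by linarith
qed

lemma has_real_derivative_along_line:
  assumes "\<And>x. (f has_derivative (\<lambda>h. f' x \<bullet> h)) (at x)"
  shows "((\<lambda>t. f (a + t *\<^sub>R d)) has_real_derivative (f' (a + t *\<^sub>R d) \<bullet> d)) (at t)"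
proof -
  have "((\<lambda>t. a + t *\<^sub>R d) has_derivative (\<lambda>h. h *\<^sub>R d)) (at t)"
    by (auto intro!: derivative_eq_intros)
  from diff_chain_at[OF this assms]
  have "((\<lambda>t. f (a + t *\<^sub>R d)) has_derivative (\<lambda>h. f' (a + t *\<^sub>R d) \<bullet> (h *\<^sub>R d))) (at t)"
    by (simp add: o_def)
  then show ?thesis
    unfolding has_field_derivative_def
    by (rule has_derivative_eq_rhs) (auto simp: fun_eq_iff)
qed

definition armijo :: "('a::real_inner \<Rightarrow> real) \<Rightarrow> ('a \<Rightarrow> 'a) \<Rightarrow> real \<Rightarrow> 'a \<Rightarrow> 'a \<Rightarrow> real \<Rightarrow> bool" where
  "armijo f f' \<beta> a z t \<longleftrightarrow> f (a + t *\<^sub>R (z - a)) \<le> f a + \<beta> * t * (f' a \<bullet> (z - a))"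

lemma armijo_of_gradient_variation:
  assumes der: "\<And>x. (f has_derivative (\<lambda>h. f' x \<bullet> h)) (at x)" and "0 < t"
    and variation: "\<And>s. 0 < s \<Longrightarrow> s < t
      \<Longrightarrow> (f' (a + s *\<^sub>R (z - a)) - f' a) \<bullet> (z - a) \<le> (1 - \<beta>) * - (f' a \<bullet> (z - a))"
  shows "armijo f f' \<beta> a z t"
proof -
  define d where "d = z - a"
  obtain \<theta> where "0 < \<theta>" "\<theta> < t"
    and mvt: "f (a + t *\<^sub>R d) - f (a + 0 *\<^sub>R d) = (t - 0) * (f' (a + \<theta> *\<^sub>R d) \<bullet> d)"
    using MVT2[OF \<open>0 < t\<close> has_real_derivative_along_line[OF der]] by blast
  have "f' (a + \<theta> *\<^sub>R d) \<bullet> d \<le> \<beta> * (f' a \<bullet> d)"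
    using variation[OF \<open>0 < \<theta>\<close> \<open>\<theta> < t\<close>] unfolding d_def by (simp add: inner_diff_left algebra_simps)
  then have "t * (f' (a + \<theta> *\<^sub>R d) \<bullet> d) \<le> \<beta> * t * (f' a \<bullet> d)"
    using \<open>0 < t\<close> by (simp add: mult_left_mono mult.left_commute)
  then show ?thesis
    using mvt unfolding armijo_def d_def by simp
qed

lemma armijo_for_small_steps:
  fixes D :: "'a::euclidean_space set"
  assumes "compact D" "convex D"
    and der: "\<And>x. (f has_derivative (\<lambda>h. f' x \<bullet> h)) (at x)"
    and "continuous_on D f'" and "\<beta> < 1" and "0 < \<delta>"
  obtains \<eta> where "0 < \<eta>"
    "\<And>a z t. a \<in> D \<Longrightarrow> z \<in> D \<Longrightarrow> f' a \<bullet> (z - a) \<le> - \<delta> \<Longrightarrow> 0 < t \<Longrightarrow> t < \<eta>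
      \<Longrightarrow> armijo f f' \<beta> a z t"
proof -
  obtain M where "0 < M" and M: "\<And>y. y \<in> D \<Longrightarrow> norm y \<le> M"
    using compact_imp_bounded[OF \<open>compact D\<close>] bounded_pos by blast
  define B where "B = 2 * M"
  have "0 < B"
    unfolding B_def using \<open>0 < M\<close> by simp
  have B: "norm (z - a) \<le> B" if "a \<in> D" "z \<in> D" for a z
    using norm_triangle_ineq4[of z a] M[OF that(1)] M[OF that(2)] unfolding B_def by linarith
  define e where "e = (1 - \<beta>) * \<delta> / B"
  have "0 < e"
    unfolding e_def using assms(5,6) \<open>0 < B\<close> by simp
  obtain \<eta>0 where "0 < \<eta>0" and \<eta>0: "\<And>u v. u \<in> D \<Longrightarrow> v \<in> D \<Longrightarrow> dist u v < \<eta>0 \<Longrightarrow> dist (f' u) (f' v) < e"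
    using compact_uniformly_continuous[OF assms(4,1)] \<open>0 < e\<close>
    unfolding uniformly_continuous_on_def by metis
  show thesis
  proof (rule that[of "min 1 (\<eta>0 / B)"])
    show "0 < min 1 (\<eta>0 / B)"
      using \<open>0 < \<eta>0\<close> \<open>0 < B\<close> by simp
    fix a z t
    assume "a \<in> D" "z \<in> D" and slope: "f' a \<bullet> (z - a) \<le> - \<delta>"
      and "0 < t" and t: "t < min 1 (\<eta>0 / B)"
    show "armijo f f' \<beta> a z t"
    proof (rule armijo_of_gradient_variation[OF der \<open>0 < t\<close>])
      fix s
      assume "0 < s" "s < t"
      define \<xi> where "\<xi> = a + s *\<^sub>R (z - a)"
      have "\<xi> = (1 - s) *\<^sub>R a + s *\<^sub>R z"
        unfolding \<xi>_def by (simp add: algebra_simps)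
      then have "\<xi> \<in> D"
        using convexD[OF \<open>convex D\<close> \<open>a \<in> D\<close> \<open>z \<in> D\<close>] \<open>0 < s\<close> \<open>s < t\<close> t by auto
      have "dist \<xi> a = s * norm (z - a)"
        unfolding \<xi>_def dist_norm using \<open>0 < s\<close> by simp
      also have "\<dots> \<le> t * B"
        using B[OF \<open>a \<in> D\<close> \<open>z \<in> D\<close>] \<open>0 < s\<close> \<open>s < t\<close> by (intro mult_mono) auto
      also have "\<dots> < \<eta>0"
        using t \<open>0 < B\<close> by (simp add: pos_less_divide_eq mult.commute)
      finally have "norm (f' \<xi> - f' a) < e"
        using \<eta>0[OF \<open>\<xi> \<in> D\<close> \<open>a \<in> D\<close>] by (simp add: dist_norm)
      have "(f' \<xi> - f' a) \<bullet> (z - a) \<le> norm (f' \<xi> - f' a) * norm (z - a)"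
        by (rule norm_cauchy_schwarz)
      also have "\<dots> \<le> e * B"
        using \<open>norm (f' \<xi> - f' a) < e\<close> \<open>0 < e\<close> B[OF \<open>a \<in> D\<close> \<open>z \<in> D\<close>] by (intro mult_mono) auto
      also have "e * B = (1 - \<beta>) * \<delta>"
        unfolding e_def using \<open>0 < B\<close> by simp
      also have "\<dots> \<le> (1 - \<beta>) * - (f' a \<bullet> (z - a))"
        using slope \<open>\<beta> < 1\<close> by (intro mult_left_mono) auto
      finally show "(f' (a + s *\<^sub>R (z - a)) - f' a) \<bullet> (z - a) \<le> (1 - \<beta>) * - (f' a \<bullet> (z - a))"
        unfolding \<xi>_def .
    qed
  qed
qed

lemma cgmis_step_armijo:
  assumes "cgmis_step D f f' \<beta> \<delta> \<tau> x z lam l k" "armijo f f' \<beta> (x k) (z k) (lam k)"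
  shows "l (Suc k) = l k" "lam k \<le> lam (Suc k)"
  using assms unfolding cgmis_step_def armijo_def by (auto split: if_splits)

lemma cgmis_step_not_armijo:
  assumes "cgmis_step D f f' \<beta> \<delta> \<tau> x z lam l k" "\<not> armijo f f' \<beta> (x k) (z k) (lam k)"
  shows "l (Suc k) = Suc (l k)"
  using assms unfolding cgmis_step_def armijo_def by (auto split: if_splits)

lemma cgmis_step_slope:
  assumes "cgmis_step D f f' \<beta> \<delta> \<tau> x z lam l k"
  shows "f' (x k) \<bullet> (z k - x k) \<le> - \<delta>"
  using assms unfolding cgmis_step_def by (simp add: inner_diff_right)

lemma stage_step_size_bounds:
  assumes "stage_init \<tau> x lam l x0" "\<forall>j<k. cgmis_step D f f' \<beta> \<delta> \<tau> x z lam l j"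
  shows "0 < lam k" "lam k \<le> \<tau> (l k)"
proof -
  have "0 < lam k \<and> lam k \<le> \<tau> (l k)"
    using assms(2)
  proof (induction k)
    case 0
    with assms(1) show ?case
      unfolding stage_init_def by simp
  next
    case (Suc k)
    then have "0 < lam k \<and> lam k \<le> \<tau> (l k)" "cgmis_step D f f' \<beta> \<delta> \<tau> x z lam l k"
      by simp_all
    then show ?case
      unfolding cgmis_step_def by (auto split: if_splits)
  qed
  then show "0 < lam k" "lam k \<le> \<tau> (l k)"
    by simp_all
qed

lemma stage_iterates_in_convex:
  assumes "convex D" "x0 \<in> D" "admissible_tau \<tau>" "stage_init \<tau> x lam l x0"
    and "\<forall>j<k. cgmis_step D f f' \<beta> \<delta> \<tau> x z lam l j"
  shows "x k \<in> D"
  using assms(5)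
proof (induction k)
  case 0
  with assms(2,4) show ?case
    unfolding stage_init_def by simp
next
  case (Suc k)
  then have steps: "\<forall>j<k. cgmis_step D f f' \<beta> \<delta> \<tau> x z lam l j"
    and step: "cgmis_step D f f' \<beta> \<delta> \<tau> x z lam l k"
    by auto
  with Suc.IH have "x k \<in> D"
    by blast
  have "0 < lam k" "lam k < 1"
    using stage_step_size_bounds[OF assms(4) steps] assms(3)
    unfolding admissible_tau_def by (auto intro: order.strict_trans1)
  moreover have "z k \<in> D" "x (Suc k) = (1 - lam k) *\<^sub>R x k + lam k *\<^sub>R z k"
    using step unfolding cgmis_step_def by (auto simp: algebra_simps)
  ultimately show ?case
    using convexD[OF assms(1) \<open>x k \<in> D\<close>] by simp
qed

lemma stage_eventually_armijo:
  assumes adm: "admissible_tau \<tau>" and init: "stage_init \<tau> x lam l x0"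
    and steps: "\<And>k. cgmis_step D f f' \<beta> \<delta> \<tau> x z lam l k"
    and "0 < \<eta>" and small: "\<And>k. lam k < \<eta> \<Longrightarrow> armijo f f' \<beta> (x k) (z k) (lam k)"
  obtains K where "\<And>k. K \<le> k \<Longrightarrow> armijo f f' \<beta> (x k) (z k) (lam k)"
proof (rule ccontr)
  assume "\<not> thesis"
  with that have fails: "\<exists>k\<ge>K. \<not> armijo f f' \<beta> (x k) (z k) (lam k)" for K
    by blast
  have "l k \<le> l (Suc k)" for k
    using cgmis_step_armijo[OF steps] cgmis_step_not_armijo[OF steps]
    by (cases "armijo f f' \<beta> (x k) (z k) (lam k)") auto
  then have "incseq l"
    by (rule incseq_SucI)
  have unbounded: "\<exists>K. N \<le> l K" for N
  proof (induction N)
    case (Suc N)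
    then obtain K where "N \<le> l K"
      by blast
    moreover obtain k where "K \<le> k" "\<not> armijo f f' \<beta> (x k) (z k) (lam k)"
      using fails by blast
    ultimately have "Suc N \<le> l (Suc k)"
      using cgmis_step_not_armijo[OF steps] incseqD[OF \<open>incseq l\<close>] by fastforce
    then show ?case
      by blast
  qed simp
  obtain L where L: "\<And>n. L \<le> n \<Longrightarrow> \<tau> n < \<eta>"
    using adm \<open>0 < \<eta>\<close> unfolding admissible_tau_def lim_sequentially
    by (metis dist_real_def abs_less_iff diff_zero)
  obtain K where "L \<le> l K"
    using unbounded by blast
  have "armijo f f' \<beta> (x k) (z k) (lam k)" if "K \<le> k" for k
  proof (rule small)
    have "L \<le> l k"
      using \<open>L \<le> l K\<close> incseqD[OF \<open>incseq l\<close> that] by simp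
    moreover have "lam k \<le> \<tau> (l k)"
      using stage_step_size_bounds(2)[OF init] steps by blast
    ultimately show "lam k < \<eta>"
      using L by (auto intro: order.strict_trans1)
  qed
  with fails show False
    by blast
qed

lemma stage_uniform_decrease:
  assumes steps: "\<And>k. cgmis_step D f f' \<beta> \<delta> \<tau> x z lam l k"
    and "0 \<le> \<beta>" "0 \<le> \<delta>" "0 \<le> lam K"
    and armijo: "\<And>k. K \<le> k \<Longrightarrow> armijo f f' \<beta> (x k) (z k) (lam k)" and "K \<le> k"
  shows "f (x (Suc k)) \<le> f (x k) - \<beta> * lam K * \<delta>"
proof -
  have "lam K \<le> lam k"
    using \<open>K \<le> k\<close>
  proof (induction k rule: dec_induct)
    case (step k)
    then show ?case
      using cgmis_step_armijo(2)[OF steps armijo[of k]] by simp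
  qed simp
  then have "\<beta> * lam K * \<delta> \<le> \<beta> * lam k * - (f' (x k) \<bullet> (z k - x k))"
    using cgmis_step_slope[OF steps, of k] assms(2-4) by (intro mult_mono mult_left_mono) auto
  moreover have "x (Suc k) = x k + lam k *\<^sub>R (z k - x k)"
    using steps[of k] unfolding cgmis_step_def by simp
  ultimately show ?thesis
    using armijo[OF \<open>K \<le> k\<close>] unfolding armijo_def by simp
qed

lemma stage_not_infinite:
  fixes D :: "'a::euclidean_space set"
  assumes "compact D" "convex D" "D \<noteq> {}"
    and der: "\<And>x. (f has_derivative (\<lambda>h. f' x \<bullet> h)) (at x)"
    and "continuous_on D f'" and "0 < \<beta>" and "\<beta> < 1" and "0 < \<delta>" and "x0 \<in> D"
  shows "\<not> stage_infinite D f f' \<beta> \<delta> x0"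
proof
  assume "stage_infinite D f f' \<beta> \<delta> x0"
  then obtain \<tau> x z lam l where adm: "admissible_tau \<tau>" and init: "stage_init \<tau> x lam l x0"
    and steps: "\<And>k. cgmis_step D f f' \<beta> \<delta> \<tau> x z lam l k"
    unfolding stage_infinite_def by blast
  have xD: "x k \<in> D" for k
    using stage_iterates_in_convex[OF assms(2,9) adm init] steps by blast
  have zD: "z k \<in> D" for k
    using steps[of k] unfolding cgmis_step_def by blast
  have lam_pos: "0 < lam k" for k
    using stage_step_size_bounds(1)[OF init] steps by blast
  obtain \<eta> where "0 < \<eta>" and small:
    "\<And>a z t. a \<in> D \<Longrightarrow> z \<in> D \<Longrightarrow> f' a \<bullet> (z - a) \<le> - \<delta> \<Longrightarrow> 0 < t \<Longrightarrow> t < \<eta>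
      \<Longrightarrow> armijo f f' \<beta> a z t"
    using armijo_for_small_steps[OF assms(1,2) der assms(5,7,8)] by blast
  obtain K where armijo: "\<And>k. K \<le> k \<Longrightarrow> armijo f f' \<beta> (x k) (z k) (lam k)"
    using stage_eventually_armijo[OF adm init steps \<open>0 < \<eta>\<close>
        small[OF xD zD cgmis_step_slope[OF steps] lam_pos]] by blast
  have "\<not> bdd_below (range (\<lambda>n. f (x (K + n))))"
  proof (rule not_bdd_below_of_uniform_decrease)
    show "f (x (K + Suc n)) \<le> f (x (K + n)) - \<beta> * lam K * \<delta>" for n
      using stage_uniform_decrease[OF steps _ _ _ armijo le_add1] lam_pos[of K] assms(6,8) by simp
    show "0 < \<beta> * lam K * \<delta>"
      using lam_pos[of K] assms(6,8) by simp
  qed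
  moreover have "continuous_on D f"
    by (intro continuous_at_imp_continuous_on ballI has_derivative_continuous[OF der])
  then have "bdd_below (f ` D)"
    by (intro bounded_imp_bdd_below compact_imp_bounded compact_continuous_image \<open>compact D\<close>)
  then have "bdd_below (range (\<lambda>n. f (x (K + n))))"
    by (rule bdd_below.mono) (auto intro: xD)
  ultimately show False
    by blast
qed

primrec cgmis_trajectory ::
  "('a::real_inner \<Rightarrow> real) \<Rightarrow> ('a \<Rightarrow> 'a) \<Rightarrow> real \<Rightarrow> (nat \<Rightarrow> real) \<Rightarrow> ('a \<Rightarrow> 'a) \<Rightarrow> 'a \<Rightarrow> nat
    \<Rightarrow> 'a \<times> real \<times> nat" where
  "cgmis_trajectory f f' \<beta> \<tau> Z x0 0 = (x0, \<tau> 0, 0)"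
| "cgmis_trajectory f f' \<beta> \<tau> Z x0 (Suc k) = (case cgmis_trajectory f f' \<beta> \<tau> Z x0 k of (x, t, j) \<Rightarrow>
     if armijo f f' \<beta> x (Z x) t then (x + t *\<^sub>R (Z x - x), t, j)
     else (x + t *\<^sub>R (Z x - x), min t (\<tau> (Suc j)), Suc j))"

lemma admissible_tau_inverse: "admissible_tau (\<lambda>n. inverse (real (Suc (Suc n))))"
  unfolding admissible_tau_def
proof
  show "\<forall>n. 0 < inverse (real (Suc (Suc n))) \<and> inverse (real (Suc (Suc n))) < 1"
    by (auto simp: inverse_less_1_iff)
  show "(\<lambda>n. inverse (real (Suc (Suc n)))) \<longlonglongrightarrow> 0"
    using LIMSEQ_Suc[OF LIMSEQ_inverse_real_of_nat] .
qed

lemma cgmis_trajectory_execution: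
  assumes "\<And>n. 0 < \<tau> n" and Z: "\<And>y. Z y \<in> D \<and> mu D f' y = f' y \<bullet> (y - Z y)"
  obtains x lam l where "stage_init \<tau> x lam l x0"
    "\<And>k. \<delta> \<le> mu D f' (x k) \<Longrightarrow> cgmis_step D f f' \<beta> \<delta> \<tau> x (\<lambda>k. Z (x k)) lam l k"
proof -
  define g where "g = cgmis_trajectory f f' \<beta> \<tau> Z x0"
  define x where "x k = fst (g k)" for k
  define lam where "lam k = fst (snd (g k))" for k
  define l where "l k = snd (snd (g k))" for k
  have init: "stage_init \<tau> x lam l x0"
    unfolding stage_init_def x_def lam_def l_def g_def using assms(1) by simp
  have bounds: "0 < lam k \<and> lam k \<le> \<tau> (l k)" for k
  proof (induction k)
    case 0
    then show ?case
      unfolding lam_def l_def g_def using assms(1) by simp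
  next
    case (Suc k)
    then show ?case
      using assms(1)[of "Suc (l k)"] unfolding lam_def l_def g_def
      by (auto simp: min_def split: prod.splits)
  qed
  show thesis
  proof (rule that[OF init])
    fix k
    assume "\<delta> \<le> mu D f' (x k)"
    with Z[of "x k"] bounds[of k] assms(1)[of "Suc (l k)"]
    show "cgmis_step D f f' \<beta> \<delta> \<tau> x (\<lambda>k. Z (x k)) lam l k"
      unfolding cgmis_step_def x_def lam_def l_def g_def
      by (auto simp: armijo_def min_def inner_diff_right split: prod.splits)
  qed
qed

lemma stage_output_exists:
  fixes D :: "'a::euclidean_space set"
  assumes "compact D" "convex D" "D \<noteq> {}"
    and "\<And>x. (f has_derivative (\<lambda>h. f' x \<bullet> h)) (at x)"
    and "continuous_on D f'" and "0 < \<beta>" and "\<beta> < 1" and "0 < \<delta>" and "x0 \<in> D"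
  obtains w1 where "stage_output D f f' \<beta> \<delta> x0 w1"
proof -
  define \<tau> :: "nat \<Rightarrow> real" where "\<tau> n = inverse (real (Suc (Suc n)))" for n
  have adm: "admissible_tau \<tau>"
    unfolding \<tau>_def by (rule admissible_tau_inverse)
  have \<tau>_pos: "0 < \<tau> n" for n
    unfolding \<tau>_def by simp
  define Z where "Z y = (SOME s. s \<in> D \<and> mu D f' y = f' y \<bullet> (y - s))" for y
  have Z: "Z y \<in> D \<and> mu D f' y = f' y \<bullet> (y - Z y)" for y
    unfolding Z_def by (rule someI_ex) (use mu_attained[OF \<open>compact D\<close> \<open>D \<noteq> {}\<close>] in metis)
  obtain x lam l where init: "stage_init \<tau> x lam l x0"
    and step: "\<And>k. \<delta> \<le> mu D f' (x k) \<Longrightarrow> cgmis_step D f f' \<beta> \<delta> \<tau> x (\<lambda>k. Z (x k)) lam l k"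
    using cgmis_trajectory_execution[of \<tau> Z D f' x0 \<delta> f \<beta>, OF \<tau>_pos Z] by blast
  have "\<exists>K. mu D f' (x K) < \<delta>"
  proof (rule ccontr)
    assume "\<nexists>K. mu D f' (x K) < \<delta>"
    then have "stage_infinite D f f' \<beta> \<delta> x0"
      unfolding stage_infinite_def using adm init step by (blast intro: leI)
    with stage_not_infinite[OF assms] show False
      by blast
  qed
  define K where "K = (LEAST K. mu D f' (x K) < \<delta>)"
  have "mu D f' (x K) < \<delta>"
    unfolding K_def by (rule LeastI_ex) fact
  moreover have "\<forall>k<K. cgmis_step D f f' \<beta> \<delta> \<tau> x (\<lambda>k. Z (x k)) lam l k"
    using not_less_Least[where P = "\<lambda>K. mu D f' (x K) < \<delta>"] step unfolding K_def by (simp add: not_less)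
  ultimately show thesis
    using that adm init unfolding stage_output_def by blast
qed

lemma stage_output_in_convex:
  assumes "convex D" "x0 \<in> D" "stage_output D f f' \<beta> \<delta> x0 w1"
  shows "w1 \<in> D"
  using assms(3) stage_iterates_in_convex[OF assms(1,2)] unfolding stage_output_def by blast

lemma cgmis_run_exists:
  fixes D :: "'a::euclidean_space set"
  assumes "compact D" "convex D" "D \<noteq> {}"
    and "\<And>x. (f has_derivative (\<lambda>h. f' x \<bullet> h)) (at x)"
    and "continuous_on D f'" and "0 < \<beta>" and "\<beta> < 1" and "\<And>p. 0 < \<delta> (Suc p)" and "w0 \<in> D"
  shows "\<exists>w. cgmis_run D f f' \<beta> \<delta> w0 w"
proof -
  have "\<exists>y. y \<in> D \<and> stage_output D f f' \<beta> (\<delta> (Suc p)) x y" if "x \<in> D" for x p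
    using stage_output_exists[OF assms(1-7) assms(8) that] stage_output_in_convex[OF \<open>convex D\<close> that]
    by metis
  then obtain w where "\<And>p. (w p \<in> D \<and> (p = 0 \<longrightarrow> w p = w0))
      \<and> stage_output D f f' \<beta> (\<delta> (Suc p)) (w p) (w (Suc p))"
    using dependent_nat_choice[where P = "\<lambda>p x. x \<in> D \<and> (p = 0 \<longrightarrow> x = w0)"
        and Q = "\<lambda>p x y. stage_output D f f' \<beta> (\<delta> (Suc p)) x y"] \<open>w0 \<in> D\<close>
    by (metis nat.distinct(1))
  then show ?thesis
    unfolding cgmis_run_def by blast
qed

lemma cgmis_run_in_convex:
  assumes "convex D" "w0 \<in> D" "cgmis_run D f f' \<beta> \<delta> w0 w"
  shows "w p \<in> D"
proof (induction p)
  case 0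
  with assms show ?case
    unfolding cgmis_run_def by simp
next
  case (Suc p)
  with assms show ?case
    unfolding cgmis_run_def by (blast intro: stage_output_in_convex)
qed

lemma cgmis_run_mu_less:
  assumes "cgmis_run D f f' \<beta> \<delta> w0 w"
  shows "mu D f' (w (Suc p)) < \<delta> (Suc p)"
proof -
  from assms have "stage_output D f f' \<beta> (\<delta> (Suc p)) (w p) (w (Suc p))"
    unfolding cgmis_run_def by blast
  then show ?thesis
    unfolding stage_output_def by auto
qed

lemma cgmis_run_limit_point:
  assumes "compact D" "convex D" "w0 \<in> D" "cgmis_run D f f' \<beta> \<delta> w0 w"
  obtains a where "limit_point_seq w a"
proof -
  have "\<forall>p. w p \<in> D"
    using cgmis_run_in_convex[OF assms(2-4)] by blast
  with compact_imp_seq_compact[OF assms(1)] obtain a and r :: "nat \<Rightarrow> nat"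
    where "strict_mono r" "(w \<circ> r) \<longlonglongrightarrow> a"
    by (rule seq_compactE)
  then show thesis
    using that unfolding limit_point_seq_def by blast
qed

lemma cgmis_run_limit_point_in_D0:
  assumes "compact D" "convex D" "continuous_on D f'" "\<delta> \<longlonglongrightarrow> 0" "w0 \<in> D"
    and run: "cgmis_run D f f' \<beta> \<delta> w0 w" and "limit_point_seq w a"
  shows "a \<in> D0 D f'"
proof -
  obtain r where "strict_mono r" and lim: "(w \<circ> r) \<longlonglongrightarrow> a"
    using \<open>limit_point_seq w a\<close> unfolding limit_point_seq_def by blast
  have wD: "w p \<in> D" for p
    using cgmis_run_in_convex[OF assms(2,5) run] .
  have "a \<in> D"
    using closed_sequentially[OF compact_imp_closed[OF \<open>compact D\<close>] _ lim] wD by simp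
  have "0 \<le> f' a \<bullet> (y - a)" if "y \<in> D" for y
  proof -
    have "(\<lambda>n. f' (w (r n)) \<bullet> (w (r n) - y)) \<longlonglongrightarrow> f' a \<bullet> (a - y)"
      using continuous_on_tendsto_compose[OF \<open>continuous_on D f'\<close> lim \<open>a \<in> D\<close>] lim wD
      by (auto intro!: tendsto_intros simp: o_def)
    moreover have "(\<lambda>n. \<delta> (r n)) \<longlonglongrightarrow> 0"
      using LIMSEQ_subseq_LIMSEQ[OF \<open>\<delta> \<longlonglongrightarrow> 0\<close> \<open>strict_mono r\<close>] by (simp add: o_def)
    moreover have "f' (w (r n)) \<bullet> (w (r n) - y) \<le> \<delta> (r n)" if "1 \<le> n" for n
    proof -
      obtain q where q: "r n = Suc q"
        using seq_suble[OF \<open>strict_mono r\<close>, of n] \<open>1 \<le> n\<close> by (cases "r n") auto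
      have "f' (w (r n)) \<bullet> (w (r n) - y) \<le> mu D f' (w (r n))"
        by (rule inner_le_mu[OF \<open>compact D\<close> \<open>y \<in> D\<close>])
      also have "\<dots> < \<delta> (r n)"
        using cgmis_run_mu_less[OF run, of q] q by simp
      finally show ?thesis
        by simp
    qed
    ultimately have "f' a \<bullet> (a - y) \<le> 0"
      by (intro tendsto_le[OF sequentially_bot]) (auto simp: eventually_sequentially)
    then show ?thesis
      by (simp add: inner_diff_right)
  qed
  with \<open>a \<in> D\<close> show ?thesis
    unfolding D0_def by blast
qed

lemma D0_subset_Dstar:
  assumes "pseudo_convex_on D f f'"
  shows "D0 D f' \<subseteq> Dstar D f"
proof
  fix a
  assume "a \<in> D0 D f'"
  with assms have "a \<in> D" and min: "\<And>y. y \<in> D \<Longrightarrow> f a \<le> f y"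
    unfolding D0_def pseudo_convex_on_def by auto
  then have "fstar D f = f a"
    unfolding fstar_def by (intro antisym cINF_lower cINF_greatest bdd_belowI2) auto
  with \<open>a \<in> D\<close> show "a \<in> Dstar D f"
    unfolding Dstar_def by simp
qed

lemma tendsto_of_limit_points:
  fixes w :: "nat \<Rightarrow> 'a::metric_space" and g :: "'a \<Rightarrow> 'b::metric_space"
  assumes "seq_compact K" and wK: "\<And>p. w p \<in> K" and "continuous_on K g"
    and limit_points: "\<And>a. limit_point_seq w a \<Longrightarrow> g a = c"
  shows "(\<lambda>p. g (w p)) \<longlonglongrightarrow> c"
proof (rule ccontr)
  assume "\<not> ?thesis"
  then obtain e where "0 < e" and "\<not> (\<forall>\<^sub>F p in sequentially. dist (g (w p)) c < e)"
    unfolding tendsto_iff by blast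
  then have "infinite {p. e \<le> dist (g (w p)) c}"
    unfolding infinite_nat_iff_unbounded_le eventually_sequentially by (auto simp: not_less)
  from infinite_enumerate[OF this] obtain s :: "nat \<Rightarrow> nat"
    where "strict_mono s" and far: "\<forall>n. e \<le> dist (g (w (s n))) c"
    by blast
  have "\<forall>n. (w \<circ> s) n \<in> K"
    using wK by simp
  with \<open>seq_compact K\<close> obtain a and r :: "nat \<Rightarrow> nat"
    where "a \<in> K" "strict_mono r" and lim: "((w \<circ> s) \<circ> r) \<longlonglongrightarrow> a"
    by (rule seq_compactE)
  have "limit_point_seq w a"
    unfolding limit_point_seq_def
  proof (intro exI conjI)
    show "strict_mono (s \<circ> r)"
      using \<open>strict_mono s\<close> \<open>strict_mono r\<close> by (rule strict_mono_o)
    show "(w \<circ> (s \<circ> r)) \<longlonglongrightarrow> a"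
      using lim by (simp only: o_assoc)
  qed
  then have "g a = c"
    by (rule limit_points)
  have "(\<lambda>n. g (((w \<circ> s) \<circ> r) n)) \<longlonglongrightarrow> g a"
    using continuous_on_tendsto_compose[OF \<open>continuous_on K g\<close> lim \<open>a \<in> K\<close>] wK by simp
  then obtain n where "dist (g (w (s (r n)))) c < e"
    using \<open>0 < e\<close> \<open>g a = c\<close> unfolding tendsto_iff eventually_sequentially by auto
  with far[rule_format, of "r n"] show False
    by linarith
qed

lemma cgmis_run_pseudo_convex_optimal:
  assumes "compact D" "convex D" "continuous_on D f" "continuous_on D f'" "\<delta> \<longlonglongrightarrow> 0" "w0 \<in> D"
    and "pseudo_convex_on D f f'" and run: "cgmis_run D f f' \<beta> \<delta> w0 w"
  shows "(\<forall>a. limit_point_seq w a \<longrightarrow> a \<in> Dstar D f) \<and> (\<lambda>p. f (w p)) \<longlonglongrightarrow> fstar D f"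
proof
  show optimal: "\<forall>a. limit_point_seq w a \<longrightarrow> a \<in> Dstar D f"
    using cgmis_run_limit_point_in_D0[OF assms(1,2,4-6) run] D0_subset_Dstar[OF assms(7)] by blast
  have "\<And>p. w p \<in> D"
    by (rule cgmis_run_in_convex[OF assms(2,6) run])
  with compact_imp_seq_compact[OF \<open>compact D\<close>] show "(\<lambda>p. f (w p)) \<longlonglongrightarrow> fstar D f"
  proof (rule tendsto_of_limit_points)
    show "continuous_on D f"
      by fact
    show "f a = fstar D f" if "limit_point_seq w a" for a
      using optimal that unfolding Dstar_def by blast
  qed
qed

theorem theorem5p1:
  fixes D :: "'a::euclidean_space set" and f :: "'a \<Rightarrow> real" and f' :: "'a \<Rightarrow> 'a"
    and w0 :: 'a and \<beta> :: real and \<delta> :: "nat \<Rightarrow> real"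
  assumes "D \<noteq> {}" and "convex D" and "closed D" and "bounded D"
    and "\<And>x. (f has_derivative (\<lambda>h. f' x \<bullet> h)) (at x)"
    and "continuous_on UNIV f'"
    and "w0 \<in> D" and "0 < \<beta>" and "\<beta> < 1"
    and "\<And>p. p \<ge> 1 \<Longrightarrow> 0 < \<delta> p" and "\<delta> \<longlonglongrightarrow> 0"
  shows "((\<forall>p\<ge>1. \<forall>x0\<in>D. \<not> stage_infinite D f f' \<beta> (\<delta> p) x0)
          \<and> (\<exists>w. cgmis_run D f f' \<beta> \<delta> w0 w))
         \<and> (\<forall>w. cgmis_run D f f' \<beta> \<delta> w0 w \<longrightarrow>
           (\<exists>a. limit_point_seq w a) \<and> (\<forall>a. limit_point_seq w a \<longrightarrow> a \<in> D0 D f'))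
         \<and> (pseudo_convex_on D f f' \<longrightarrow> (\<forall>w. cgmis_run D f f' \<beta> \<delta> w0 w \<longrightarrow>
           (\<forall>a. limit_point_seq w a \<longrightarrow> a \<in> Dstar D f) \<and> (\<lambda>p. f (w p)) \<longlonglongrightarrow> fstar D f))"
proof -
  note cvx = assms(2) and der = assms(5) and w0 = assms(7)
  have "compact D"
    using assms(3,4) by (simp add: compact_eq_bounded_closed)
  have "continuous_on D f'"
    using assms(6) by (rule continuous_on_subset) simp
  have "continuous_on D f"
    by (intro continuous_at_imp_continuous_on ballI has_derivative_continuous[OF der])
  note stage_assms = \<open>compact D\<close> cvx assms(1) der \<open>continuous_on D f'\<close> assms(8,9)
  have "\<forall>p\<ge>1. \<forall>x0\<in>D. \<not> stage_infinite D f f' \<beta> (\<delta> p) x0"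
    using stage_not_infinite[OF stage_assms] assms(10) by blast
  moreover have "\<exists>w. cgmis_run D f f' \<beta> \<delta> w0 w"
    using cgmis_run_exists[OF stage_assms] assms(10) w0 by simp
  moreover have "(\<exists>a. limit_point_seq w a) \<and> (\<forall>a. limit_point_seq w a \<longrightarrow> a \<in> D0 D f')"
    if run: "cgmis_run D f f' \<beta> \<delta> w0 w" for w
    using cgmis_run_limit_point[OF \<open>compact D\<close> cvx w0 run]
      cgmis_run_limit_point_in_D0[OF \<open>compact D\<close> cvx \<open>continuous_on D f'\<close> assms(11) w0 run] by blast
  moreover note cgmis_run_pseudo_convex_optimal[OF \<open>compact D\<close> cvx \<open>continuous_on D f\<close>
      \<open>continuous_on D f'\<close> assms(11) w0]
  ultimately show ?thesis
    by blast
qed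

end
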